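(* Let $\{\nu_{nk}\}_{n\geq1,1\leq k\leq k_n}\subset\mathscr{P}_{\mathbb{T}^d}$ be a triangular array such that $\rho_n=\sum_{k=1}^{k_n}\nu_{nk}$ satisfies conditions (iii) and (iv). Let $\{\boldsymbol\theta_{nk}\}\subset(-\pi,\pi]^d$ satisfy $\lim_{n\to\infty}\sum_{k=1}^{k_n}(\mathbf{1}-\cos\boldsymbol\theta_{nk})=\mathbf{0}$ (componentwise cosine). Then $\widetilde\rho_n(\cdot)=\sum_{k=1}^{k_n}\nu_{nk}(e^{i\boldsymbol\theta_{nk}}\cdot)$ also satisfies conditions (iii) and (iv). Moreover, $\widetilde\rho_n\Rightarrow_{\mathbf{1}}\rho$ whenever $\rho_n\Rightarrow_{\mathbf{1}}\rho$, and $\rho_n$ and $\widetilde\rho_n$ define the same quadratic form $Q$ in (iv).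
   Context: $\mathscr{P}_{\mathbb{T}^d}$: Borel probability measures on $\mathbb{T}^d$. $\mathscr{M}_{\mathbb{T}^d}^{\mathbf{1}}$: positive Borel measures on $\mathbb{T}^d$ finite on every Borel set bounded away from $\mathbf{1}$. $\rho_n\Rightarrow_{\mathbf{1}}\rho$ means $\int f\,d\rho_n\to\int f\,d\rho$ for all bounded continuous $f$ with support bounded away from $\mathbf{1}$. Notation: $\arg\boldsymbol s\in(-\pi,\pi]^d$ componentwise, $\Im\boldsymbol s$ componentwise, $\mathscr{U}_\epsilon=\{\boldsymbol s:\|\arg\boldsymbol s\|<\epsilon\}$, $e^{i\boldsymbol\theta}B=\{(e^{i\theta_1}s_1,\dots,e^{i\theta_d}s_d):\boldsymbol s\in B\}$. Conditions on a sequence $\{\rho_n\}\subset\mathscr{M}_{\mathbb{T}^d}^{\mathbf{1}}$: (iii) there is $\rho\in\mathscr{M}_{\mathbb{T}^d}^{\mathbf{1}}$ with $\rho(\{\mathbf{1}\})=0$ and $\rho_n\Rightarrow_{\mathbf{1}}\rho$; (iv) for every $\boldsymbol p\in\mathbb{Z}^d$, $\lim_{\epsilon\to0}\limsup_n\int_{\mathscr{U}_\epsilon}\langle\boldsymbol p,\Im\boldsymbol s\rangle^2d\rho_n=\lim_{\epsilon\to0}\liminf_n\int_{\mathscr{U}_\epsilon}\langle\boldsymbol p,\Im\boldsymbol s\rangle^2d\rho_n=:Q(\boldsymbol p)\in\mathbb{R}$. *)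

theory Defs
  imports "HOL-Probability.Probability"
begin

text \<open>The d-torus T^d, realised inside complex^'d (the dimension d = CARD('d)).\<close>
definition torus :: "(complex ^ 'd) set" where
  "torus = {s. \<forall>i. cmod (s $ i) = 1}"

definition one_t :: "complex ^ 'd" where
  "one_t = (\<chi> i. 1)"

definition torus_borel :: "(complex ^ 'd) measure" where
  "torus_borel = restrict_space borel torus"

definition prob_torus :: "(complex ^ 'd) measure \<Rightarrow> bool" where
  "prob_torus \<nu> \<longleftrightarrow> prob_space \<nu> \<and> sets \<nu> = sets torus_borel"

definition away_from_one :: "(complex ^ 'd) set \<Rightarrow> bool" where
  "away_from_one B \<longleftrightarrow> (\<exists>\<delta>>0. \<forall>s\<in>B. dist s one_t \<ge> \<delta>)"

definition M1 :: "(complex ^ 'd) measure set" where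
  "M1 = {\<rho>. sets \<rho> = sets torus_borel \<and>
            (\<forall>B \<in> sets torus_borel. away_from_one B \<longrightarrow> emeasure \<rho> B < \<infinity>)}"

definition test_fun :: "(complex ^ 'd \<Rightarrow> real) \<Rightarrow> bool" where
  "test_fun f \<longleftrightarrow> continuous_on torus f \<and> bounded (f ` torus) \<and>
     away_from_one (closure {s \<in> torus. f s \<noteq> 0})"

definition conv_one :: "(nat \<Rightarrow> (complex ^ 'd) measure) \<Rightarrow> (complex ^ 'd) measure \<Rightarrow> bool" where
  "conv_one \<rho>s \<rho> \<longleftrightarrow>
     (\<forall>f. test_fun f \<longrightarrow> (\<lambda>n. integral\<^sup>L (\<rho>s n) f) \<longlonglongrightarrow> integral\<^sup>L \<rho> f)"

definition argv :: "complex ^ 'd \<Rightarrow> real ^ 'd" where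
  "argv s = (\<chi> i. Arg (s $ i))"

definition imv :: "complex ^ 'd \<Rightarrow> real ^ 'd" where
  "imv s = (\<chi> i. Im (s $ i))"

definition U_eps :: "real \<Rightarrow> (complex ^ 'd) set" where
  "U_eps \<epsilon> = {s \<in> torus. norm (argv s) < \<epsilon>}"

definition cond_iii :: "(nat \<Rightarrow> (complex ^ 'd) measure) \<Rightarrow> bool" where
  "cond_iii \<rho>s \<longleftrightarrow> (\<exists>\<rho> \<in> M1. emeasure \<rho> {one_t} = 0 \<and> conv_one \<rho>s \<rho>)"

definition cond_iv :: "(nat \<Rightarrow> (complex ^ 'd) measure) \<Rightarrow> (int ^ 'd \<Rightarrow> real) \<Rightarrow> bool" where
  "cond_iv \<rho>s Q \<longleftrightarrow> (\<forall>p :: int ^ 'd.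
     let F = (\<lambda>\<epsilon> n. ereal (\<integral>s \<in> U_eps \<epsilon>. ((\<Sum>i\<in>UNIV. of_int (p $ i) * imv s $ i))\<^sup>2 \<partial>(\<rho>s n)))
     in ((\<lambda>\<epsilon>. limsup (F \<epsilon>)) \<longlongrightarrow> ereal (Q p)) (at_right 0) \<and>
        ((\<lambda>\<epsilon>. liminf (F \<epsilon>)) \<longlongrightarrow> ereal (Q p)) (at_right 0))"

definition sum_meas :: "nat set \<Rightarrow> (nat \<Rightarrow> (complex ^ 'd) measure) \<Rightarrow> (complex ^ 'd) measure" where
  "sum_meas K \<mu> = measure_of torus (sets torus_borel) (\<lambda>A. \<Sum>k\<in>K. emeasure (\<mu> k) A)"

definition rot :: "real ^ 'd \<Rightarrow> complex ^ 'd \<Rightarrow> complex ^ 'd" where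
  "rot \<theta> s = (\<chi> i. cis (\<theta> $ i) * s $ i)"

text \<open>The measure B |-> nu(e^{i theta} B), i.e. the image of nu under s |-> e^{-i theta} s.\<close>
definition rotate_meas :: "real ^ 'd \<Rightarrow> (complex ^ 'd) measure \<Rightarrow> (complex ^ 'd) measure" where
  "rotate_meas \<theta> \<nu> = distr \<nu> torus_borel (rot (- \<theta>))"

end

theory Submission
  imports Defs
begin

text \<open>Rotating the \<open>k\<close>-th summand by \<open>\<theta>\<^sub>n\<^sub>k\<close> moves every point of the torus by
  \<open>sqrt (2 * \<Sum>\<^sub>i (1 - cos \<theta>\<^sub>n\<^sub>k\<^sub>i))\<close>, and these quantities are uniformly small
  since their squares sum to a null sequence. A test function \<open>f\<close> vanishes near \<open>1\<close> and is
  uniformly continuous, so \<open>\<bar>f (e\<^sup>-\<^sup>i\<^sup>\<theta> s) - f s\<bar> \<le> \<epsilon> g s\<close> for a fixed test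
  function \<open>g\<close>, whose integrals against \<open>\<rho>\<^sub>n\<close> stay bounded; hence the rotated sums
  converge to the same limit, which also gives (iii).
  For (iv), a rotation by \<open>\<theta>\<close> shifts arguments by \<open>\<theta>\<close> and changes
  \<open>\<langle>p, Im s\<rangle>\<close> by at most \<open>\<bar>p\<bar>\<^sub>1\<close> times the displacement. The truncated second
  moments of the rotated sums on \<open>U\<^sub>\<epsilon>\<close> are therefore squeezed between \<open>1 \<plusminus> \<epsilon>\<close>
  times those of \<open>\<rho>\<^sub>n\<close> on \<open>U\<^sub>\<epsilon>\<^sub>/\<^sub>2\<close> and \<open>U\<^sub>3\<^sub>\<epsilon>\<^sub>/\<^sub>2\<close>, up to errors of
  order \<open>\<Sum>\<^sub>k\<^sub>,\<^sub>i (1 - cos \<theta>\<^sub>n\<^sub>k\<^sub>i) / \<epsilon>\<close>; letting \<open>n \<rightarrow> \<infinity>\<close> and then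
  \<open>\<epsilon> \<rightarrow> 0\<close> yields the same \<open>Q\<close>.\<close>

section \<open>Finite sums and rotations of measures on the torus\<close>

lemma space_torus_borel [simp]: "space torus_borel = torus"
  by (simp add: torus_borel_def space_restrict_space)

lemma compact_torus: "compact (torus :: (complex ^ 'd) set)"
proof (rule compact_eq_bounded_closed [THEN iffD2], rule conjI)
  show "bounded (torus :: (complex ^ 'd) set)"
    by (rule boundedI [where B = "sqrt CARD('d)"]) (simp add: torus_def norm_vec_def L2_set_def)
  have "torus = (\<Inter>i. {s :: complex ^ 'd. cmod (s $ i) = 1})"
    by (auto simp: torus_def)
  also have "closed \<dots>"
    by (intro closed_INT ballI closed_Collect_eq continuous_intros)
  finally show "closed (torus :: (complex ^ 'd) set)" .
qed

lemma measurable_sets_eq_torus_borel: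
  assumes "sets M = sets torus_borel" and "f \<in> borel_measurable torus_borel"
  shows "f \<in> borel_measurable M"
  using assms(2) unfolding measurable_cong_sets [OF assms(1) refl] .

lemma space_eq_torus: "sets M = sets torus_borel \<Longrightarrow> space M = torus"
  by (metis sets_eq_imp_space_eq space_torus_borel)

lemma rot_in_torus: "s \<in> torus \<Longrightarrow> rot \<phi> s \<in> torus"
  by (simp add: torus_def rot_def norm_mult)

lemma rot_rot_uminus [simp]: "rot \<phi> (rot (- \<phi>) s) = s"
  by (simp add: rot_def vec_eq_iff mult.assoc [symmetric] cis_mult)

lemma rot_measurable: "rot \<phi> \<in> torus_borel \<rightarrow>\<^sub>M torus_borel"
proof -
  have "continuous_on torus (rot \<phi>)"
    unfolding rot_def by (intro continuous_intros)
  then have "rot \<phi> \<in> borel_measurable torus_borel"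
    unfolding torus_borel_def by (rule borel_measurable_continuous_on_restrict)
  then show ?thesis
    unfolding torus_borel_def
    by (intro measurable_restrict_space2) (auto simp: rot_in_torus space_restrict_space)
qed

lemma measurable_comp_rot:
  "f \<in> borel_measurable torus_borel \<Longrightarrow> (\<lambda>s. f (rot \<phi> s)) \<in> borel_measurable torus_borel"
  using measurable_comp [OF rot_measurable] by (simp add: comp_def)

lemma sigma_algebra_torus_borel: "sigma_algebra torus (sets torus_borel)"
  using sets.sigma_algebra_axioms [of torus_borel] by simp

lemma sets_sum_meas [measurable_cong]:
  fixes \<mu> :: "nat \<Rightarrow> (complex ^ 'd) measure"
  shows "sets (sum_meas K \<mu>) = sets torus_borel"
  using sets.space_closed [of "torus_borel :: (complex ^ 'd) measure"]
  by (simp add: sum_meas_def sets_measure_of sigma_algebra.sigma_sets_eq [OF sigma_algebra_torus_borel])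

lemma emeasure_sum_meas:
  fixes \<mu> :: "nat \<Rightarrow> (complex ^ 'd) measure"
  assumes "finite K" and sets: "\<And>k. k \<in> K \<Longrightarrow> sets (\<mu> k) = sets torus_borel"
    and "A \<in> sets torus_borel"
  shows "emeasure (sum_meas K \<mu>) A = (\<Sum>k\<in>K. emeasure (\<mu> k) A)"
  unfolding sum_meas_def
proof (rule emeasure_measure_of_sigma)
  show "sigma_algebra torus (sets torus_borel)"
    by (rule sigma_algebra_torus_borel)
  show "positive (sets torus_borel) (\<lambda>A. \<Sum>k\<in>K. emeasure (\<mu> k) A)"
    by (simp add: positive_def)
  show "countably_additive (sets torus_borel) (\<lambda>A. \<Sum>k\<in>K. emeasure (\<mu> k) A)"
  proof (rule countably_additiveI)
    fix B :: "nat \<Rightarrow> (complex ^ 'd) set"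
    assume "range B \<subseteq> sets torus_borel" "disjoint_family B"
    then show "(\<Sum>i. \<Sum>k\<in>K. emeasure (\<mu> k) (B i)) = (\<Sum>k\<in>K. emeasure (\<mu> k) (\<Union>i. B i))"
      using sets by (subst suminf_sum) (auto intro!: sum.cong suminf_emeasure)
  qed
qed fact

lemma nn_integral_sum_meas:
  assumes K: "finite K" and sets: "\<And>k. k \<in> K \<Longrightarrow> sets (\<mu> k) = sets torus_borel"
    and f: "f \<in> borel_measurable torus_borel"
  shows "(\<integral>\<^sup>+x. f x \<partial>sum_meas K \<mu>) = (\<Sum>k\<in>K. \<integral>\<^sup>+x. f x \<partial>\<mu> k)"
  using f
proof (induct rule: borel_measurable_induct)
  case (cong f g)
  have "\<And>M. sets M = sets torus_borel \<Longrightarrow> (\<integral>\<^sup>+x. f x \<partial>M) = (\<integral>\<^sup>+x. g x \<partial>M)"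
    using cong(3) by (intro nn_integral_cong) (simp add: space_eq_torus)
  then show ?case
    using cong(4) sets by (simp add: sets_sum_meas)
next
  case (set A)
  then show ?case
    using sets by (simp add: emeasure_sum_meas [OF K sets] sets_sum_meas)
next
  case (mult u c)
  then show ?case
    using sets by (simp add: nn_integral_cmult sum_distrib_left measurable_sets_eq_torus_borel sets_sum_meas)
next
  case (add u v)
  then show ?case
    using sets by (simp add: nn_integral_add sum.distrib measurable_sets_eq_torus_borel sets_sum_meas)
next
  case (seq U)
  have "(\<integral>\<^sup>+x. (SUP i. U i x) \<partial>sum_meas K \<mu>) = (SUP i. \<Sum>k\<in>K. \<integral>\<^sup>+x. U i x \<partial>\<mu> k)"
    using seq by (simp add: nn_integral_monotone_convergence_SUP measurable_sets_eq_torus_borel sets_sum_meas)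
  also have "\<dots> = (\<Sum>k\<in>K. SUP i. \<integral>\<^sup>+x. U i x \<partial>\<mu> k)"
    using seq(4) by (intro ennreal_SUP_sum incseq_nn_integral)
  also have "\<dots> = (\<Sum>k\<in>K. \<integral>\<^sup>+x. (SUP i. U i x) \<partial>\<mu> k)"
    using seq sets by (simp add: nn_integral_monotone_convergence_SUP measurable_sets_eq_torus_borel)
  finally show ?case
    by (simp only: SUP_apply)
qed

lemma
  fixes f :: "complex ^ 'd \<Rightarrow> real"
  assumes K: "finite K" and sets: "\<And>k. k \<in> K \<Longrightarrow> sets (\<mu> k) = sets torus_borel"
    and f: "f \<in> borel_measurable torus_borel"
    and int: "\<And>k. k \<in> K \<Longrightarrow> integrable (\<mu> k) f"
  shows integrable_sum_meas: "integrable (sum_meas K \<mu>) f"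
    and integral_sum_meas: "integral\<^sup>L (sum_meas K \<mu>) f = (\<Sum>k\<in>K. integral\<^sup>L (\<mu> k) f)"
proof -
  have nn: "(\<integral>\<^sup>+x. ennreal (g x) \<partial>sum_meas K \<mu>) = (\<Sum>k\<in>K. \<integral>\<^sup>+x. ennreal (g x) \<partial>\<mu> k)"
    if "g \<in> borel_measurable torus_borel" for g :: "complex ^ 'd \<Rightarrow> real"
    using that by (intro nn_integral_sum_meas [OF K sets]) auto
  have fin: "(\<integral>\<^sup>+x. ennreal (f x) \<partial>\<mu> k) < \<infinity>" "(\<integral>\<^sup>+x. ennreal (- f x) \<partial>\<mu> k) < \<infinity>"
    if "k \<in> K" for k
    using int [OF that] by (auto simp: real_integrable_def top.not_eq_extremum)
  show *: "integrable (sum_meas K \<mu>) f"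
    unfolding real_integrable_def using f fin K
    by (simp add: nn measurable_cong_sets [OF sets_sum_meas] top.not_eq_extremum)
  show "integral\<^sup>L (sum_meas K \<mu>) f = (\<Sum>k\<in>K. integral\<^sup>L (\<mu> k) f)"
    using f fin int
    by (simp add: real_lebesgue_integral_def [OF *] real_lebesgue_integral_def nn enn2real_sum
        sum_subtractf)
qed

lemma sets_rotate_meas [measurable_cong]: "sets (rotate_meas \<theta> \<nu>) = sets torus_borel"
  by (simp add: rotate_meas_def)

lemma
  fixes f :: "complex ^ 'd \<Rightarrow> real"
  assumes "sets \<nu> = sets torus_borel" and "f \<in> borel_measurable torus_borel"
  shows integrable_rotate_meas_iff:
      "integrable (rotate_meas \<theta> \<nu>) f \<longleftrightarrow> integrable \<nu> (\<lambda>s. f (rot (- \<theta>) s))"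
    and integral_rotate_meas:
      "integral\<^sup>L (rotate_meas \<theta> \<nu>) f = integral\<^sup>L \<nu> (\<lambda>s. f (rot (- \<theta>) s))"
proof -
  have "rot (- \<theta>) \<in> \<nu> \<rightarrow>\<^sub>M torus_borel"
    using rot_measurable unfolding measurable_cong_sets [OF assms(1) refl] .
  then show "integrable (rotate_meas \<theta> \<nu>) f \<longleftrightarrow> integrable \<nu> (\<lambda>s. f (rot (- \<theta>) s))"
    and "integral\<^sup>L (rotate_meas \<theta> \<nu>) f = integral\<^sup>L \<nu> (\<lambda>s. f (rot (- \<theta>) s))"
    using assms(2) by (simp_all add: rotate_meas_def integrable_distr_eq integral_distr)
qed

lemma integrable_prob_torus:
  fixes f :: "complex ^ 'd \<Rightarrow> real"
  assumes "prob_torus \<mu>" and "f \<in> borel_measurable torus_borel" and "bounded (f ` torus)"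
  shows "integrable \<mu> f"
proof -
  have sets: "sets \<mu> = sets torus_borel" and "finite_measure \<mu>"
    using assms(1) by (simp_all add: prob_torus_def prob_space.finite_measure)
  obtain B where "\<And>s. s \<in> torus \<Longrightarrow> norm (f s) \<le> B"
    using assms(3) by (auto simp: bounded_iff)
  then have "AE s in \<mu>. norm (f s) \<le> B"
    using sets by (intro AE_I2) (simp add: space_eq_torus)
  then show ?thesis
    using assms(2) sets
    by (intro finite_measure.integrable_const_bound [OF \<open>finite_measure \<mu>\<close>])
      (simp_all add: measurable_sets_eq_torus_borel)
qed

lemma bounded_image_comp_rot: "bounded (f ` torus) \<Longrightarrow> bounded ((\<lambda>s. f (rot \<phi> s)) ` torus)"
  by (rule bounded_subset) (auto simp: rot_in_torus)

lemma integral_sum_meas_rotate_le: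
  fixes h g :: "complex ^ 'd \<Rightarrow> real"
  assumes K: "finite K" and prob: "\<And>k. k \<in> K \<Longrightarrow> prob_torus (\<mu> k)"
    and h: "h \<in> borel_measurable torus_borel" "bounded (h ` torus)"
    and g: "g \<in> borel_measurable torus_borel" "bounded (g ` torus)"
    and le: "\<And>k s. k \<in> K \<Longrightarrow> s \<in> torus \<Longrightarrow> h (rot (- \<phi> k) s) \<le> g s + c k"
  shows "integral\<^sup>L (sum_meas K (\<lambda>k. rotate_meas (\<phi> k) (\<mu> k))) h
           \<le> integral\<^sup>L (sum_meas K \<mu>) g + (\<Sum>k\<in>K. c k)"
proof -
  have sets: "\<And>k. k \<in> K \<Longrightarrow> sets (\<mu> k) = sets torus_borel"
    using prob by (simp add: prob_torus_def)
  have int_h: "integrable (\<mu> k) (\<lambda>s. h (rot (- \<phi> k) s))" if "k \<in> K" for k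
    using prob [OF that] h by (intro integrable_prob_torus measurable_comp_rot bounded_image_comp_rot)
  have int_g: "integrable (\<mu> k) g" if "k \<in> K" for k
    using prob [OF that] g by (rule integrable_prob_torus)
  have prob_space: "prob_space (\<mu> k)" if "k \<in> K" for k
    using prob [OF that] by (simp add: prob_torus_def)
  have int_const: "integrable (\<mu> k) (\<lambda>_. a)" if "k \<in> K" for k and a :: real
    using prob_space [OF that] by (simp add: prob_space.finite_measure finite_measure.integrable_const)
  have "integral\<^sup>L (sum_meas K (\<lambda>k. rotate_meas (\<phi> k) (\<mu> k))) h
      = (\<Sum>k\<in>K. integral\<^sup>L (\<mu> k) (\<lambda>s. h (rot (- \<phi> k) s)))"
    using K h int_h sets
    by (simp add: integral_sum_meas sets_rotate_meas integrable_rotate_meas_iff integral_rotate_meas)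
  also have "\<dots> \<le> (\<Sum>k\<in>K. integral\<^sup>L (\<mu> k) (\<lambda>s. g s + c k))"
    using int_h int_g int_const le sets by (intro sum_mono integral_mono) (simp_all add: space_eq_torus)
  also have "\<dots> = (\<Sum>k\<in>K. integral\<^sup>L (\<mu> k) g + c k)"
    using int_g int_const prob_space by (intro sum.cong refl) (simp add: prob_space.prob_space)
  also have "\<dots> = integral\<^sup>L (sum_meas K \<mu>) g + (\<Sum>k\<in>K. c k)"
    using K g int_g sets by (simp add: integral_sum_meas sum.distrib)
  finally show ?thesis .
qed

lemma integrable_sum_meas_prob_torus:
  fixes f :: "complex ^ 'd \<Rightarrow> real"
  assumes "finite K" and "\<And>k. k \<in> K \<Longrightarrow> prob_torus (\<mu> k)"
    and "f \<in> borel_measurable torus_borel" and "bounded (f ` torus)"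
  shows "integrable (sum_meas K \<mu>) f"
  using assms by (intro integrable_sum_meas integrable_prob_torus) (simp_all add: prob_torus_def)

section \<open>Geometry of rotations\<close>

definition versin_sum :: "real ^ 'd \<Rightarrow> real" where
  "versin_sum \<phi> = (\<Sum>i\<in>UNIV. 1 - cos (\<phi> $ i))"

lemma versin_sum_nonneg: "0 \<le> versin_sum \<phi>"
  unfolding versin_sum_def by (intro sum_nonneg) simp

lemma versin_le_versin_sum: "1 - cos (\<phi> $ i) \<le> versin_sum \<phi>"
  unfolding versin_sum_def by (rule member_le_sum) simp_all

lemma norm_cis_minus_one_squared: "(cmod (cis t - 1))\<^sup>2 = 2 * (1 - cos t)"
proof -
  have "(cmod (cis t - 1))\<^sup>2 = (cos t - 1)\<^sup>2 + (sin t)\<^sup>2"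
    by (simp add: cmod_power2)
  also have "\<dots> = 2 * (1 - cos t)"
    using sin_cos_squared_add [of t] by (simp add: power2_eq_square algebra_simps)
  finally show ?thesis .
qed

lemma dist_rot_uminus:
  assumes "s \<in> torus"
  shows "dist (rot (- \<phi>) s) s = sqrt (2 * versin_sum \<phi>)"
proof -
  have "(cmod ((rot (- \<phi>) s - s) $ i))\<^sup>2 = 2 * (1 - cos (\<phi> $ i))" for i
  proof -
    have "(rot (- \<phi>) s - s) $ i = (cis (- \<phi> $ i) - 1) * s $ i"
      by (simp add: rot_def algebra_simps)
    then show ?thesis
      using assms norm_cis_minus_one_squared [of "- \<phi> $ i"] by (simp add: torus_def norm_mult)
  qed
  then show ?thesis
    by (simp add: dist_norm norm_vec_def L2_set_def versin_sum_def sum_distrib_left)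
qed

lemma versin_sum_small_imp_norm_small:
  fixes \<eta> :: real
  assumes "0 < \<eta>"
  obtains r where "0 < r"
    "\<And>\<phi> :: real ^ 'd. (\<And>i. \<bar>\<phi> $ i\<bar> \<le> pi) \<Longrightarrow> versin_sum \<phi> < r \<Longrightarrow> norm \<phi> < \<eta>"
proof
  define a where "a = min (\<eta> / CARD('d)) pi"
  have a: "0 < a" "a \<le> pi" "CARD('d) * a \<le> \<eta>"
    using assms by (auto simp: a_def field_simps min_def)
  then show "0 < 1 - cos a"
    using cos_monotone_0_pi [of 0 a] by simp
  fix \<phi> :: "real ^ 'd"
  assume range: "\<And>i. \<bar>\<phi> $ i\<bar> \<le> pi" and small: "versin_sum \<phi> < 1 - cos a"
  have "\<bar>\<phi> $ i\<bar> < a" for i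
  proof (rule ccontr)
    assume "\<not> \<bar>\<phi> $ i\<bar> < a"
    then have "cos \<bar>\<phi> $ i\<bar> \<le> cos a"
      using a range [of i] by (intro cos_monotone_0_pi_le) auto
    then show False
      using small versin_le_versin_sum [of \<phi> i] by simp
  qed
  then have "norm \<phi> < (\<Sum>i\<in>(UNIV :: 'd set). a)"
    using norm_le_l1_cart [of \<phi>] sum_strict_mono [of UNIV "\<lambda>i. \<bar>\<phi> $ i\<bar>" "\<lambda>_. a"]
    by fastforce
  with a show "norm \<phi> < \<eta>"
    by simp
qed

lemma Arg_cis_mult:
  assumes "cmod z = 1" and "- pi < Arg z + t" and "Arg z + t \<le> pi"
  shows "Arg (cis t * z) = Arg z + t"
proof -
  have "z \<noteq> 0"
    using assms(1) by auto
  then have "cis (Arg z) = z"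
    using assms(1) by (simp add: cis_Arg sgn_div_norm)
  then have "cis t * z = cis (Arg z + t)"
    by (metis cis_mult mult.commute)
  then show ?thesis
    using assms(2,3) by (simp add: Arg_cis)
qed

lemma rot_in_U_eps:
  assumes s: "s \<in> U_eps a" and \<phi>: "norm \<phi> < b" and "a + b \<le> pi"
  shows "rot \<phi> s \<in> U_eps (a + b)"
proof -
  have st: "s \<in> torus" and sa: "norm (argv s) < a"
    using s by (auto simp: U_eps_def)
  have "Arg (cis (\<phi> $ i) * s $ i) = Arg (s $ i) + \<phi> $ i" for i
  proof (rule Arg_cis_mult)
    show "cmod (s $ i) = 1"
      using st by (simp add: torus_def)
    have "\<bar>Arg (s $ i) + \<phi> $ i\<bar> < pi"
      using component_le_norm_cart [of "argv s" i] component_le_norm_cart [of \<phi> i] sa \<phi> assms(3)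
      by (simp add: argv_def)
    then show "- pi < Arg (s $ i) + \<phi> $ i" "Arg (s $ i) + \<phi> $ i \<le> pi"
      by simp_all
  qed
  then have "argv (rot \<phi> s) = argv s + \<phi>"
    by (simp add: argv_def rot_def vec_eq_iff)
  then have "norm (argv (rot \<phi> s)) < a + b"
    using norm_triangle_ineq [of "argv s" \<phi>] sa \<phi> by simp
  then show ?thesis
    using rot_in_torus [OF st] by (simp add: U_eps_def)
qed

lemma U_eps_mono: "a \<le> b \<Longrightarrow> U_eps a \<subseteq> U_eps b"
  by (auto simp: U_eps_def)

lemma versin_sum_le_sum:
  "finite K \<Longrightarrow> k \<in> K \<Longrightarrow> versin_sum (\<theta> k) \<le> (\<Sum>k\<in>K. versin_sum (\<theta> k))"
  by (intro member_le_sum versin_sum_nonneg)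

lemma eventually_dist_rot_lt:
  fixes \<theta> :: "nat \<Rightarrow> nat \<Rightarrow> real ^ 'd"
  assumes K: "\<And>n. finite (K n)"
    and small: "(\<lambda>n. \<Sum>k\<in>K n. versin_sum (\<theta> n k)) \<longlonglongrightarrow> 0"
    and "0 < \<eta>"
  shows "\<forall>\<^sub>F n in sequentially. \<forall>k\<in>K n. \<forall>s\<in>torus. dist (rot (- \<theta> n k) s) s < \<eta>"
  using order_tendstoD(2) [OF small, of "\<eta>\<^sup>2 / 2"]
proof (rule eventually_mono, use \<open>0 < \<eta>\<close> in simp, intro ballI)
  fix n k and s :: "complex ^ 'd"
  assume sum: "(\<Sum>k\<in>K n. versin_sum (\<theta> n k)) < \<eta>\<^sup>2 / 2" and "k \<in> K n" "s \<in> torus"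
  then have "2 * versin_sum (\<theta> n k) < \<eta>\<^sup>2"
    using versin_sum_le_sum [OF K, of k n "\<theta> n"] by simp
  then show "dist (rot (- \<theta> n k) s) s < \<eta>"
    using \<open>0 < \<eta>\<close> real_sqrt_less_mono [of _ "\<eta>\<^sup>2"] by (simp add: dist_rot_uminus [OF \<open>s \<in> torus\<close>])
qed

lemma eventually_norm_lt:
  fixes \<theta> :: "nat \<Rightarrow> nat \<Rightarrow> real ^ 'd"
  assumes K: "\<And>n. finite (K n)"
    and range: "\<forall>\<^sub>F n in sequentially. \<forall>k\<in>K n. \<forall>i. \<bar>\<theta> n k $ i\<bar> \<le> pi"
    and small: "(\<lambda>n. \<Sum>k\<in>K n. versin_sum (\<theta> n k)) \<longlonglongrightarrow> 0"
    and "0 < \<eta>"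
  shows "\<forall>\<^sub>F n in sequentially. \<forall>k\<in>K n. norm (\<theta> n k) < \<eta>"
proof -
  obtain r where "0 < r"
    and r: "\<And>\<phi> :: real ^ 'd. (\<And>i. \<bar>\<phi> $ i\<bar> \<le> pi) \<Longrightarrow> versin_sum \<phi> < r \<Longrightarrow> norm \<phi> < \<eta>"
    using versin_sum_small_imp_norm_small [OF \<open>0 < \<eta>\<close>] by blast
  from range order_tendstoD(2) [OF small \<open>0 < r\<close>] show ?thesis
  proof eventually_elim
    case (elim n)
    then show ?case
      using r versin_sum_le_sum [OF K, of _ n "\<theta> n"] by fastforce
  qed
qed

lemma tendsto_sum_versin_sum:
  fixes \<theta> :: "nat \<Rightarrow> nat \<Rightarrow> real ^ 'd"
  assumes "(\<lambda>n. \<Sum>k\<in>K n. (\<chi> i. 1 - cos (\<theta> n k $ i))) \<longlonglongrightarrow> 0"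
  shows "(\<lambda>n. \<Sum>k\<in>K n. versin_sum (\<theta> n k)) \<longlonglongrightarrow> 0"
proof -
  have "(\<lambda>n. \<Sum>i\<in>UNIV. (\<Sum>k\<in>K n. (\<chi> i. 1 - cos (\<theta> n k $ i))) $ i) \<longlonglongrightarrow> (\<Sum>i\<in>UNIV. (0 :: real ^ 'd) $ i)"
    by (intro tendsto_sum tendsto_vec_nth assms)
  moreover have "(\<Sum>i\<in>UNIV. (\<Sum>k\<in>K n. (\<chi> i. 1 - cos (\<theta> n k $ i))) $ i) = (\<Sum>k\<in>K n. versin_sum (\<theta> n k))"
    for n
    unfolding versin_sum_def sum_component vec_lambda_beta by (rule sum.swap)
  ultimately show ?thesis
    by simp
qed

section \<open>Convergence against test functions\<close>

lemma test_fun_measurable: "test_fun f \<Longrightarrow> f \<in> borel_measurable torus_borel"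
  unfolding test_fun_def torus_borel_def by (auto intro: borel_measurable_continuous_on_restrict)

lemma test_fun_cutoff:
  fixes \<delta> :: real
  assumes "0 < \<delta>"
  obtains g where "test_fun g" "\<And>s. 0 \<le> g s" "\<And>s. \<delta> \<le> dist s one_t \<Longrightarrow> g s = 1"
proof
  define g where "g s = min 1 (max 0 (2 / \<delta> * dist s one_t - 1))" for s :: "complex ^ 'd"
  show "0 \<le> g s" for s
    by (simp add: g_def)
  show "g s = 1" if "\<delta> \<le> dist s one_t" for s
    using that assms by (simp add: g_def field_simps)
  have "{s \<in> torus. g s \<noteq> 0} \<subseteq> {s. \<delta> / 2 \<le> dist s one_t}"
  proof safe
    fix s
    assume "g s \<noteq> 0"
    then have "0 < 2 / \<delta> * dist s one_t - 1"
      by (auto simp: g_def)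
    then show "\<delta> / 2 \<le> dist s one_t"
      using assms by (simp add: field_simps)
  qed
  moreover have "closed {s :: complex ^ 'd. \<delta> / 2 \<le> dist s one_t}"
    by (intro closed_Collect_le continuous_intros)
  ultimately have "closure {s \<in> torus. g s \<noteq> 0} \<subseteq> {s. \<delta> / 2 \<le> dist s one_t}"
    by (rule closure_minimal)
  then have "away_from_one (closure {s \<in> torus. g s \<noteq> 0})"
    unfolding away_from_one_def using assms by (intro exI [of _ "\<delta> / 2"]) auto
  moreover have "continuous_on torus g"
    unfolding g_def by (intro continuous_intros)
  moreover have "bounded (g ` torus)"
    by (intro boundedI [of _ 1]) (auto simp: g_def)
  ultimately show "test_fun g"
    by (simp add: test_fun_def)
qed

text \<open>The measures of the array may carry unbounded mass near 1, so the modulus of continuity of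
  a test function is measured against a fixed test function rather than a constant.\<close>

lemma test_fun_modulus:
  fixes f :: "complex ^ 'd \<Rightarrow> real"
  assumes "test_fun f"
  obtains g where "test_fun g"
    "\<And>e. 0 < e \<Longrightarrow> \<exists>\<eta>>0. \<forall>s\<in>torus. \<forall>t\<in>torus. dist t s < \<eta> \<longrightarrow> \<bar>f t - f s\<bar> \<le> e * g s"
proof -
  obtain \<delta> where \<delta>: "0 < \<delta>" "\<And>s. s \<in> closure {s \<in> torus. f s \<noteq> 0} \<Longrightarrow> \<delta> \<le> dist s one_t"
    using assms unfolding test_fun_def away_from_one_def by blast
  have f_zero: "f s = 0" if "s \<in> torus" "dist s one_t < \<delta>" for s
    using \<delta>(2) [of s] closure_subset [of "{s \<in> torus. f s \<noteq> 0}"] that by force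
  obtain g :: "complex ^ 'd \<Rightarrow> real"
    where g: "test_fun g" "\<And>s. 0 \<le> g s" "\<And>s. \<delta> / 2 \<le> dist s one_t \<Longrightarrow> g s = 1"
    using test_fun_cutoff [of "\<delta> / 2"] \<delta>(1) by auto
  have "uniformly_continuous_on torus f"
    using assms compact_torus by (intro compact_uniformly_continuous) (simp_all add: test_fun_def)
  have "\<exists>\<eta>>0. \<forall>s\<in>torus. \<forall>t\<in>torus. dist t s < \<eta> \<longrightarrow> \<bar>f t - f s\<bar> \<le> e * g s"
    if "0 < e" for e
  proof -
    obtain d where d: "0 < d" "\<And>s t. s \<in> torus \<Longrightarrow> t \<in> torus \<Longrightarrow> dist t s < d \<Longrightarrow> dist (f t) (f s) < e"
      using \<open>uniformly_continuous_on torus f\<close> \<open>0 < e\<close> unfolding uniformly_continuous_on_def by metis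
    have "\<bar>f t - f s\<bar> \<le> e * g s"
      if "s \<in> torus" "t \<in> torus" "dist t s < min d (\<delta> / 2)" for s t
    proof (cases "\<delta> / 2 \<le> dist s one_t")
      case True
      then show ?thesis
        using d(2) [of s t] that g(3) by (simp add: dist_real_def)
    next
      case False
      then have "dist t one_t < \<delta>"
        using dist_triangle [of t one_t s] that(3) by simp
      moreover have "dist s one_t < \<delta>"
        using False zero_le_dist [of s one_t] by linarith
      ultimately have "f t = 0" and "f s = 0"
        using f_zero that(1,2) by simp_all
      then show ?thesis
        using g(2) [of s] \<open>0 < e\<close> by simp
    qed
    then show ?thesis
      using d(1) \<delta>(1) by (intro exI [of _ "min d (\<delta> / 2)"]) auto
  qed
  with g show thesis
    using that by blast
qed

lemma abs_integral_sum_meas_rotate_diff_le: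
  fixes f g :: "complex ^ 'd \<Rightarrow> real"
  assumes K: "finite K" and prob: "\<And>k. k \<in> K \<Longrightarrow> prob_torus (\<mu> k)"
    and f: "f \<in> borel_measurable torus_borel" "bounded (f ` torus)"
    and g: "g \<in> borel_measurable torus_borel" "bounded (g ` torus)"
    and close: "\<And>k s. k \<in> K \<Longrightarrow> s \<in> torus \<Longrightarrow> \<bar>f (rot (- \<phi> k) s) - f s\<bar> \<le> c * g s"
  shows "\<bar>integral\<^sup>L (sum_meas K (\<lambda>k. rotate_meas (\<phi> k) (\<mu> k))) f - integral\<^sup>L (sum_meas K \<mu>) f\<bar>
           \<le> c * integral\<^sup>L (sum_meas K \<mu>) g"
proof -
  have cg: "(\<lambda>s. c * g s) \<in> borel_measurable torus_borel" "bounded ((\<lambda>s. c * g s) ` torus)"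
    using g(1) bounded_scaleR_comp [OF g(2), of c] by simp_all
  have upper: "f (rot (- \<phi> k) s) \<le> (f s + c * g s) + 0"
    and lower: "- f (rot (- \<phi> k) s) \<le> (- f s + c * g s) + 0"
    if "k \<in> K" "s \<in> torus" for k s
    using close [OF that] unfolding abs_le_iff by linarith+
  have "integral\<^sup>L (sum_meas K (\<lambda>k. rotate_meas (\<phi> k) (\<mu> k))) f
      \<le> integral\<^sup>L (sum_meas K \<mu>) (\<lambda>s. f s + c * g s) + (\<Sum>k\<in>K. 0)"
    using K prob f cg upper
    by (intro integral_sum_meas_rotate_le borel_measurable_add bounded_plus_comp) auto
  moreover have "- integral\<^sup>L (sum_meas K (\<lambda>k. rotate_meas (\<phi> k) (\<mu> k))) f
      \<le> integral\<^sup>L (sum_meas K \<mu>) (\<lambda>s. - f s + c * g s) + (\<Sum>k\<in>K. 0)"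
    using K prob f cg lower bounded_scaleR_comp [OF f(2), of "- 1"]
    by (subst integral_minus [symmetric], intro integral_sum_meas_rotate_le borel_measurable_add
        bounded_plus_comp borel_measurable_uminus) auto
  moreover have "integrable (sum_meas K \<mu>) f" "integrable (sum_meas K \<mu>) g"
    using K prob f g by (simp_all add: integrable_sum_meas_prob_torus)
  ultimately show ?thesis
    by (simp add: abs_le_iff)
qed

lemma conv_one_rotate:
  fixes \<nu> :: "nat \<Rightarrow> nat \<Rightarrow> (complex ^ 'd) measure" and \<theta> :: "nat \<Rightarrow> nat \<Rightarrow> real ^ 'd"
  assumes K: "\<And>n. finite (K n)"
    and prob: "\<forall>\<^sub>F n in sequentially. \<forall>k\<in>K n. prob_torus (\<nu> n k)"
    and small: "(\<lambda>n. \<Sum>k\<in>K n. versin_sum (\<theta> n k)) \<longlonglongrightarrow> 0"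
    and conv: "conv_one (\<lambda>n. sum_meas (K n) (\<nu> n)) \<rho>"
  shows "conv_one (\<lambda>n. sum_meas (K n) (\<lambda>k. rotate_meas (\<theta> n k) (\<nu> n k))) \<rho>"
  unfolding conv_one_def
proof (intro allI impI)
  fix f :: "complex ^ 'd \<Rightarrow> real"
  assume f: "test_fun f"
  define R where "R n = integral\<^sup>L (sum_meas (K n) (\<lambda>k. rotate_meas (\<theta> n k) (\<nu> n k))) f" for n
  define I where "I n h = integral\<^sup>L (sum_meas (K n) (\<nu> n)) h" for n and h :: "complex ^ 'd \<Rightarrow> real"
  obtain g where g: "test_fun g"
    and modulus: "\<And>e. 0 < e \<Longrightarrow> \<exists>\<eta>>0. \<forall>s\<in>torus. \<forall>t\<in>torus. dist t s < \<eta> \<longrightarrow> \<bar>f t - f s\<bar> \<le> e * g s"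
    using test_fun_modulus [OF f] by blast
  have "convergent (\<lambda>n. I n g)"
    using conv g unfolding conv_one_def I_def convergent_def by blast
  then obtain B where B: "0 < B" "\<And>n. \<bar>I n g\<bar> \<le> B"
    by (auto elim!: BseqE dest!: convergent_imp_Bseq)
  have bound: "\<forall>\<^sub>F n in sequentially. \<bar>R n - I n f\<bar> \<le> e * B" if "0 < e" for e
  proof -
    obtain \<eta> where "0 < \<eta>"
      and \<eta>: "\<And>s t. s \<in> torus \<Longrightarrow> t \<in> torus \<Longrightarrow> dist t s < \<eta> \<Longrightarrow> \<bar>f t - f s\<bar> \<le> e * g s"
      using modulus [OF \<open>0 < e\<close>] by blast
    from prob eventually_dist_rot_lt [OF K small \<open>0 < \<eta>\<close>] show ?thesis
    proof eventually_elim
      case (elim n)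
      have "\<bar>R n - I n f\<bar> \<le> e * I n g"
        unfolding R_def I_def using K elim f g
        by (intro abs_integral_sum_meas_rotate_diff_le \<eta> rot_in_torus)
          (simp_all add: test_fun_measurable test_fun_def)
      also have "\<dots> \<le> e * B"
        using B(2) [of n] \<open>0 < e\<close> by (simp add: abs_le_iff)
      finally show ?case .
    qed
  qed
  have "(\<lambda>n. R n - I n f) \<longlonglongrightarrow> 0"
  proof (rule tendstoI)
    fix r :: real
    assume "0 < r"
    then have "\<forall>\<^sub>F n in sequentially. \<bar>R n - I n f\<bar> \<le> r / (2 * B) * B"
      using bound [of "r / (2 * B)"] B(1) by simp
    then show "\<forall>\<^sub>F n in sequentially. dist (R n - I n f) 0 < r"
      by (rule eventually_mono) (use \<open>0 < r\<close> B(1) in simp)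
  qed
  moreover have "(\<lambda>n. I n f) \<longlonglongrightarrow> integral\<^sup>L \<rho> f"
    using conv f unfolding conv_one_def I_def by blast
  ultimately have "(\<lambda>n. (R n - I n f) + I n f) \<longlonglongrightarrow> 0 + integral\<^sup>L \<rho> f"
    by (rule tendsto_add)
  then show "(\<lambda>n. integral\<^sup>L (sum_meas (K n) (\<lambda>k. rotate_meas (\<theta> n k) (\<nu> n k))) f)
      \<longlonglongrightarrow> integral\<^sup>L \<rho> f"
    by (simp add: R_def)
qed

section \<open>Truncated second moments\<close>

lemma borel_measurable_Arg [measurable]: "Arg \<in> borel_measurable borel"
proof -
  have eq: "Arg = (\<lambda>z. indicator (- \<real>\<^sub>\<le>\<^sub>0) z *\<^sub>R Arg z + indicator \<real>\<^sub>\<le>\<^sub>0 z *\<^sub>R (if z = 0 then 0 else pi))"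
  proof
    fix z :: complex
    show "Arg z = indicator (- \<real>\<^sub>\<le>\<^sub>0) z *\<^sub>R Arg z + indicator \<real>\<^sub>\<le>\<^sub>0 z *\<^sub>R (if z = 0 then 0 else pi)"
    proof (cases "z \<in> \<real>\<^sub>\<le>\<^sub>0")
      case True
      then show ?thesis
        by (cases "z = 0") (simp add: indicator_def Arg_zero,
            auto simp: indicator_def Arg_eq_pi complex_nonpos_Reals_iff complex_eq_iff order_le_less)
    qed (simp add: indicator_def)
  qed
  have "(\<lambda>z. indicator (- \<real>\<^sub>\<le>\<^sub>0) z *\<^sub>R Arg z) \<in> borel_measurable borel"
    by (rule borel_measurable_continuous_on_indicator) (auto intro: continuous_on_Arg)
  moreover have "(\<lambda>z :: complex. indicator \<real>\<^sub>\<le>\<^sub>0 z *\<^sub>R (if z = 0 then 0 else pi)) \<in> borel_measurable borel"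
    by measurable
  ultimately show ?thesis
    by (subst eq) (rule borel_measurable_add)
qed

lemma borel_measurable_vec_nth [measurable]: "(\<lambda>s :: complex ^ 'd. s $ i) \<in> borel_measurable borel"
  by (intro borel_measurable_continuous_onI continuous_intros)

lemma U_eps_in_sets: "U_eps \<epsilon> \<in> sets torus_borel"
proof -
  have "{s :: complex ^ 'd. sqrt (\<Sum>i\<in>UNIV. (Arg (s $ i))\<^sup>2) < \<epsilon>} \<in> sets borel"
    by measurable
  then show ?thesis
    by (auto simp: U_eps_def argv_def norm_vec_def L2_set_def torus_borel_def sets_restrict_space)
qed

definition im_pairing :: "int ^ 'd \<Rightarrow> complex ^ 'd \<Rightarrow> real" where
  "im_pairing p s = (\<Sum>i\<in>UNIV. of_int (p $ i) * Im (s $ i))"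

definition norm1 :: "int ^ 'd \<Rightarrow> real" where
  "norm1 p = (\<Sum>i\<in>UNIV. \<bar>of_int (p $ i)\<bar>)"

lemma norm1_nonneg: "0 \<le> norm1 p"
  unfolding norm1_def by (intro sum_nonneg) simp

lemma abs_im_pairing_le:
  assumes "s \<in> torus"
  shows "\<bar>im_pairing p s\<bar> \<le> norm1 p"
proof -
  have "\<bar>im_pairing p s\<bar> \<le> (\<Sum>i\<in>UNIV. \<bar>of_int (p $ i)\<bar> * \<bar>Im (s $ i)\<bar>)"
    unfolding im_pairing_def by (rule order_trans [OF sum_abs]) (simp add: abs_mult)
  also have "\<dots> \<le> norm1 p"
  proof -
    have "\<bar>Im (s $ i)\<bar> \<le> 1" for i
      using abs_Im_le_cmod [of "s $ i"] assms by (simp add: torus_def)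
    then show ?thesis
      unfolding norm1_def by (intro sum_mono mult_left_le) simp_all
  qed
  finally show ?thesis .
qed

lemma abs_im_pairing_diff_le: "\<bar>im_pairing p t - im_pairing p s\<bar> \<le> norm1 p * dist t s"
proof -
  have "im_pairing p t - im_pairing p s = (\<Sum>i\<in>UNIV. of_int (p $ i) * Im ((t - s) $ i))"
    by (simp add: im_pairing_def sum_subtractf [symmetric] algebra_simps)
  then have "\<bar>im_pairing p t - im_pairing p s\<bar> \<le> (\<Sum>i\<in>UNIV. \<bar>of_int (p $ i)\<bar> * \<bar>Im ((t - s) $ i)\<bar>)"
    unfolding abs_mult [symmetric] by (simp only: sum_abs)
  also have "\<dots> \<le> (\<Sum>i\<in>UNIV. \<bar>of_int (p $ i)\<bar> * dist t s)"
  proof -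
    have "\<bar>Im ((t - s) $ i)\<bar> \<le> dist t s" for i
      using abs_Im_le_cmod [of "(t - s) $ i"] Finite_Cartesian_Product.norm_nth_le [of "t - s" i]
      by (simp add: dist_norm)
    then show ?thesis
      by (intro sum_mono mult_left_mono) simp_all
  qed
  finally show ?thesis
    by (simp add: norm1_def sum_distrib_right)
qed

lemma abs_two_mult_le:
  fixes a x d :: real
  assumes "0 < a"
  shows "\<bar>2 * x * d\<bar> \<le> a * x\<^sup>2 + d\<^sup>2 / a"
proof -
  have "2 * a * \<bar>x\<bar> * \<bar>d\<bar> \<le> a\<^sup>2 * x\<^sup>2 + d\<^sup>2"
    using zero_le_power2 [of "a * \<bar>x\<bar> - \<bar>d\<bar>"] by (simp add: power2_eq_square algebra_simps)
  then have "a * (2 * \<bar>x\<bar> * \<bar>d\<bar>) \<le> a * (a * x\<^sup>2 + d\<^sup>2 / a)"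
    using assms by (simp add: power2_eq_square algebra_simps)
  then show ?thesis
    using assms by (simp add: abs_mult)
qed

lemma power2_le_by_abs_diff:
  fixes a x y c :: real
  assumes "0 < a" and "\<bar>y - x\<bar> \<le> c"
  shows "y\<^sup>2 \<le> (1 + a) * x\<^sup>2 + (1 + 1 / a) * c\<^sup>2"
proof -
  define d where "d = y - x"
  have "d\<^sup>2 \<le> c\<^sup>2"
    using assms(2) by (simp add: d_def abs_le_square_iff [symmetric] power2_le_iff_abs_le)
  have "y\<^sup>2 = x\<^sup>2 + 2 * x * d + d\<^sup>2"
    by (simp add: d_def power2_eq_square algebra_simps)
  also have "\<dots> \<le> x\<^sup>2 + (a * x\<^sup>2 + d\<^sup>2 / a) + d\<^sup>2"
    using abs_two_mult_le [OF assms(1), of x d] by linarith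
  also have "\<dots> = (1 + a) * x\<^sup>2 + (1 + 1 / a) * d\<^sup>2"
    by (simp add: algebra_simps)
  also have "\<dots> \<le> (1 + a) * x\<^sup>2 + (1 + 1 / a) * c\<^sup>2"
    using \<open>d\<^sup>2 \<le> c\<^sup>2\<close> assms(1) by (intro add_left_mono mult_left_mono) simp_all
  finally show ?thesis .
qed

lemma power2_ge_by_abs_diff:
  fixes a x y c :: real
  assumes "0 < a" and "\<bar>y - x\<bar> \<le> c"
  shows "(1 - a) * x\<^sup>2 - c\<^sup>2 / a \<le> y\<^sup>2"
proof -
  define d where "d = y - x"
  have "d\<^sup>2 \<le> c\<^sup>2"
    using assms(2) by (simp add: d_def abs_le_square_iff [symmetric] power2_le_iff_abs_le)
  then have "(1 - a) * x\<^sup>2 - c\<^sup>2 / a \<le> (1 - a) * x\<^sup>2 - d\<^sup>2 / a"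
    using assms(1) by (simp add: divide_right_mono)
  also have "\<dots> \<le> x\<^sup>2 + 2 * x * d + d\<^sup>2"
    using abs_two_mult_le [OF assms(1), of x d] zero_le_power2 [of d]
    by (simp add: algebra_simps abs_le_iff)
  also have "\<dots> = y\<^sup>2"
    by (simp add: d_def power2_eq_square algebra_simps)
  finally show ?thesis .
qed

definition quad_U :: "int ^ 'd \<Rightarrow> real \<Rightarrow> complex ^ 'd \<Rightarrow> real" where
  "quad_U p \<epsilon> s = indicator (U_eps \<epsilon>) s * (im_pairing p s)\<^sup>2"

lemma set_integral_eq_quad_U:
  "(\<integral>s \<in> U_eps \<epsilon>. (\<Sum>i\<in>UNIV. of_int (p $ i) * imv s $ i)\<^sup>2 \<partial>M) = integral\<^sup>L M (quad_U p \<epsilon>)"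
  by (simp add: set_lebesgue_integral_def quad_U_def [abs_def] im_pairing_def imv_def)

lemma quad_U_nonneg: "0 \<le> quad_U p \<epsilon> s"
  by (simp add: quad_U_def)

lemma quad_U_measurable [measurable]: "quad_U p \<epsilon> \<in> borel_measurable torus_borel"
proof -
  have "im_pairing p \<in> borel_measurable torus_borel"
    unfolding im_pairing_def torus_borel_def by (intro measurable_restrict_space1) measurable
  then show ?thesis
    unfolding quad_U_def using U_eps_in_sets by measurable
qed

lemma bounded_quad_U: "bounded (quad_U p \<epsilon> ` torus)"
proof (rule boundedI)
  fix x
  assume "x \<in> quad_U p \<epsilon> ` torus"
  then obtain s where "s \<in> torus" and x: "x = quad_U p \<epsilon> s"
    by blast
  have "(im_pairing p s)\<^sup>2 \<le> (norm1 p)\<^sup>2"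
    using abs_im_pairing_le [OF \<open>s \<in> torus\<close>, of p] norm1_nonneg [of p]
    by (simp add: power2_le_iff_abs_le)
  then show "norm x \<le> (norm1 p)\<^sup>2"
    by (simp add: x quad_U_def indicator_def)
qed

lemma quad_U_rot_upper:
  assumes s: "s \<in> torus" and e: "0 < e" "e < 1" and \<phi>: "norm \<phi> < e / 2"
  shows "quad_U p e (rot (- \<phi>) s)
           \<le> (1 + e) * quad_U p (3 / 2 * e) s + (1 + 1 / e) * ((norm1 p)\<^sup>2 * (2 * versin_sum \<phi>))"
proof (cases "rot (- \<phi>) s \<in> U_eps e")
  case True
  have "rot \<phi> (rot (- \<phi>) s) \<in> U_eps (e + e / 2)"
    using rot_in_U_eps [OF True \<phi>] e pi_gt3 by simp
  then have "s \<in> U_eps (3 / 2 * e)"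
    using U_eps_mono [of "e + e / 2" "3 / 2 * e"] by auto
  moreover have "(im_pairing p (rot (- \<phi>) s))\<^sup>2
      \<le> (1 + e) * (im_pairing p s)\<^sup>2 + (1 + 1 / e) * (norm1 p * sqrt (2 * versin_sum \<phi>))\<^sup>2"
    using abs_im_pairing_diff_le [of p "rot (- \<phi>) s" s] e
    by (intro power2_le_by_abs_diff) (simp_all add: dist_rot_uminus [OF s])
  ultimately show ?thesis
    using True versin_sum_nonneg [of \<phi>] by (simp add: quad_U_def power_mult_distrib)
next
  case False
  then show ?thesis
    using e versin_sum_nonneg [of \<phi>] quad_U_nonneg [of p "3 / 2 * e" s]
    by (simp add: quad_U_def)
qed

lemma quad_U_rot_lower:
  assumes s: "s \<in> torus" and e: "0 < e" "e < 1" and \<phi>: "norm \<phi> < e / 2"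
  shows "(1 - e) * quad_U p (1 / 2 * e) s - (1 / e) * ((norm1 p)\<^sup>2 * (2 * versin_sum \<phi>))
           \<le> quad_U p e (rot (- \<phi>) s)"
proof (cases "s \<in> U_eps (1 / 2 * e)")
  case True
  have "rot (- \<phi>) s \<in> U_eps (1 / 2 * e + e / 2)"
    using rot_in_U_eps [OF True, of "- \<phi>" "e / 2"] \<phi> e pi_gt3 by simp
  then have "rot (- \<phi>) s \<in> U_eps e"
    by simp
  moreover have "(1 - e) * (im_pairing p s)\<^sup>2 - (norm1 p * sqrt (2 * versin_sum \<phi>))\<^sup>2 / e
      \<le> (im_pairing p (rot (- \<phi>) s))\<^sup>2"
    using abs_im_pairing_diff_le [of p "rot (- \<phi>) s" s] e
    by (intro power2_ge_by_abs_diff) (simp_all add: dist_rot_uminus [OF s])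
  ultimately show ?thesis
    using True versin_sum_nonneg [of \<phi>] by (simp add: quad_U_def power_mult_distrib)
next
  case False
  then have "quad_U p (1 / 2 * e) s = 0"
    by (simp add: quad_U_def)
  moreover have "0 \<le> (norm1 p)\<^sup>2 * (2 * versin_sum \<phi>) / e"
    using e versin_sum_nonneg [of \<phi>] by simp
  ultimately show ?thesis
    using quad_U_nonneg [of p e "rot (- \<phi>) s"] by simp
qed

lemma bounded_mult_quad_U: "bounded ((\<lambda>s. c * quad_U p \<epsilon> s) ` torus)"
  using bounded_scaleR_comp [OF bounded_quad_U, of c] by simp

lemma integral_sum_meas_rotate_quad_U_upper:
  fixes \<mu> :: "nat \<Rightarrow> (complex ^ 'd) measure" and \<phi> :: "nat \<Rightarrow> real ^ 'd"
  assumes K: "finite K" and prob: "\<And>k. k \<in> K \<Longrightarrow> prob_torus (\<mu> k)"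
    and e: "0 < e" "e < 1" and \<phi>: "\<And>k. k \<in> K \<Longrightarrow> norm (\<phi> k) < e / 2"
  shows "integral\<^sup>L (sum_meas K (\<lambda>k. rotate_meas (\<phi> k) (\<mu> k))) (quad_U p e)
           \<le> (1 + e) * integral\<^sup>L (sum_meas K \<mu>) (quad_U p (3 / 2 * e))
             + (1 + 1 / e) * ((norm1 p)\<^sup>2 * (2 * (\<Sum>k\<in>K. versin_sum (\<phi> k))))"
proof -
  have "integral\<^sup>L (sum_meas K (\<lambda>k. rotate_meas (\<phi> k) (\<mu> k))) (quad_U p e)
      \<le> integral\<^sup>L (sum_meas K \<mu>) (\<lambda>s. (1 + e) * quad_U p (3 / 2 * e) s)
        + (\<Sum>k\<in>K. (1 + 1 / e) * ((norm1 p)\<^sup>2 * (2 * versin_sum (\<phi> k))))"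
    using K prob e \<phi>
    by (intro integral_sum_meas_rotate_le quad_U_measurable bounded_quad_U bounded_mult_quad_U
        borel_measurable_times borel_measurable_const quad_U_rot_upper) auto
  then show ?thesis
    by (simp add: sum_distrib_left)
qed

lemma integral_sum_meas_rotate_quad_U_lower:
  fixes \<mu> :: "nat \<Rightarrow> (complex ^ 'd) measure" and \<phi> :: "nat \<Rightarrow> real ^ 'd"
  assumes K: "finite K" and prob: "\<And>k. k \<in> K \<Longrightarrow> prob_torus (\<mu> k)"
    and e: "0 < e" "e < 1" and \<phi>: "\<And>k. k \<in> K \<Longrightarrow> norm (\<phi> k) < e / 2"
  shows "(1 - e) * integral\<^sup>L (sum_meas K \<mu>) (quad_U p (1 / 2 * e))
             - (1 / e) * ((norm1 p)\<^sup>2 * (2 * (\<Sum>k\<in>K. versin_sum (\<phi> k))))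
           \<le> integral\<^sup>L (sum_meas K (\<lambda>k. rotate_meas (\<phi> k) (\<mu> k))) (quad_U p e)"
proof -
  have "integral\<^sup>L (sum_meas K (\<lambda>k. rotate_meas (\<phi> k) (\<mu> k))) (\<lambda>s. - quad_U p e s)
      \<le> integral\<^sup>L (sum_meas K \<mu>) (\<lambda>s. - (1 - e) * quad_U p (1 / 2 * e) s)
        + (\<Sum>k\<in>K. 1 / e * ((norm1 p)\<^sup>2 * (2 * versin_sum (\<phi> k))))"
  proof (intro integral_sum_meas_rotate_le K prob bounded_mult_quad_U borel_measurable_times
      borel_measurable_const quad_U_measurable)
    fix k and s :: "complex ^ 'd"
    assume "k \<in> K" "s \<in> torus"
    from quad_U_rot_lower [OF \<open>s \<in> torus\<close> e \<phi> [OF \<open>k \<in> K\<close>], of p]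
    show "- quad_U p e (rot (- \<phi> k) s)
        \<le> - (1 - e) * quad_U p (1 / 2 * e) s + 1 / e * ((norm1 p)\<^sup>2 * (2 * versin_sum (\<phi> k)))"
      by linarith
  qed (use bounded_mult_quad_U [of "- 1"] in simp_all)
  then show ?thesis
    by (simp add: sum_distrib_left sum_divide_distrib [symmetric]) (simp add: algebra_simps)
qed

lemma limsup_le_by_eventually_le:
  fixes X Y E :: "nat \<Rightarrow> real"
  assumes "0 \<le> c" and "E \<longlonglongrightarrow> 0" and "\<forall>\<^sub>F n in sequentially. Y n \<le> c * X n + E n"
  shows "limsup (\<lambda>n. ereal (Y n)) \<le> ereal c * limsup (\<lambda>n. ereal (X n))"
proof -
  have "limsup (\<lambda>n. ereal (Y n)) \<le> limsup (\<lambda>n. ereal (E n) + ereal c * ereal (X n))"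
    by (rule Limsup_mono) (use assms(3) in \<open>eventually_elim, simp add: add.commute\<close>)
  also have "\<dots> = ereal 0 + limsup (\<lambda>n. ereal c * ereal (X n))"
    using assms(2) by (intro ereal_limsup_lim_add tendsto_ereal) simp_all
  also have "\<dots> = ereal c * limsup (\<lambda>n. ereal (X n))"
    using limsup_ereal_mult_left [OF assms(1), of "\<lambda>n. ereal (X n)"]
    by (simp only: add.left_neutral zero_ereal_def [symmetric])
  finally show ?thesis .
qed

lemma liminf_ge_by_eventually_ge:
  fixes X Y E :: "nat \<Rightarrow> real"
  assumes "0 \<le> c" and "E \<longlonglongrightarrow> 0" and "\<forall>\<^sub>F n in sequentially. c * X n - E n \<le> Y n"
  shows "ereal c * liminf (\<lambda>n. ereal (X n)) \<le> liminf (\<lambda>n. ereal (Y n))"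
proof -
  have "ereal c * liminf (\<lambda>n. ereal (X n)) = ereal 0 + liminf (\<lambda>n. ereal c * ereal (X n))"
    using assms(1) by (simp add: Liminf_ereal_mult_left del: times_ereal.simps)
  also have "\<dots> = liminf (\<lambda>n. ereal (- E n) + ereal c * ereal (X n))"
    using assms(2)
    by (intro ereal_liminf_lim_add [symmetric] tendsto_ereal)
      (auto intro: tendsto_minus_cancel_left [THEN iffD1])
  also have "\<dots> \<le> liminf (\<lambda>n. ereal (Y n))"
    by (rule Liminf_mono) (use assms(3) in \<open>eventually_elim, simp\<close>)
  finally show ?thesis .
qed

lemma filterlim_scale_at_right_0:
  fixes c :: real
  assumes "0 < c"
  shows "filterlim (\<lambda>x. c * x) (at_right 0) (at_right 0)"
proof -
  have "((\<lambda>x::real. c * x) \<longlongrightarrow> 0) (at_right 0)"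
    by (auto intro!: tendsto_eq_intros)
  moreover have "\<forall>\<^sub>F x in at_right 0. c * x \<in> {0<..} \<and> c * x \<noteq> 0"
    using assms by (intro eventually_at_rightI [of 0 1]) auto
  ultimately show ?thesis
    unfolding filterlim_at by auto
qed

lemma tendsto_sandwich_scaled_at_right:
  fixes Xs Xi Ys Yi :: "real \<Rightarrow> ereal" and a b q :: real
  assumes "0 < a" and "0 < b"
    and Xs: "(Xs \<longlongrightarrow> ereal q) (at_right 0)" and Xi: "(Xi \<longlongrightarrow> ereal q) (at_right 0)"
    and Yi_le_Ys: "\<And>e. Yi e \<le> Ys e"
    and upper: "\<And>e. 0 < e \<Longrightarrow> e < 1 \<Longrightarrow> Ys e \<le> ereal (1 + e) * Xs (a * e)"
    and lower: "\<And>e. 0 < e \<Longrightarrow> e < 1 \<Longrightarrow> ereal (1 - e) * Xi (b * e) \<le> Yi e"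
  shows "(Ys \<longlongrightarrow> ereal q) (at_right 0)" and "(Yi \<longlongrightarrow> ereal q) (at_right 0)"
proof -
  have "((\<lambda>e. Xs (a * e)) \<longlongrightarrow> ereal q) (at_right 0)"
    using Xs filterlim_scale_at_right_0 [OF \<open>0 < a\<close>] by (rule filterlim_compose)
  moreover have "((\<lambda>e. ereal (1 + e)) \<longlongrightarrow> ereal (1 + 0)) (at_right 0)"
    by (intro tendsto_ereal tendsto_intros)
  ultimately have hi: "((\<lambda>e. ereal (1 + e) * Xs (a * e)) \<longlongrightarrow> ereal q) (at_right 0)"
    using tendsto_mult_ereal by fastforce
  have "((\<lambda>e. Xi (b * e)) \<longlongrightarrow> ereal q) (at_right 0)"
    using Xi filterlim_scale_at_right_0 [OF \<open>0 < b\<close>] by (rule filterlim_compose)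
  moreover have "((\<lambda>e. ereal (1 - e)) \<longlongrightarrow> ereal (1 - 0)) (at_right 0)"
    by (intro tendsto_ereal tendsto_intros)
  ultimately have lo: "((\<lambda>e. ereal (1 - e) * Xi (b * e)) \<longlongrightarrow> ereal q) (at_right 0)"
    using tendsto_mult_ereal by fastforce
  have small: "\<forall>\<^sub>F e in at_right 0. 0 < e \<and> e < (1 :: real)"
    by (intro eventually_at_rightI [of 0 1]) auto
  show "(Ys \<longlongrightarrow> ereal q) (at_right 0)" and "(Yi \<longlongrightarrow> ereal q) (at_right 0)"
    by (rule tendsto_sandwich [OF _ _ lo hi];
        use small in \<open>eventually_elim, use upper lower Yi_le_Ys order_trans in blast\<close>)+
qed

lemma cond_iv_rotate:
  fixes \<nu> :: "nat \<Rightarrow> nat \<Rightarrow> (complex ^ 'd) measure" and \<theta> :: "nat \<Rightarrow> nat \<Rightarrow> real ^ 'd"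
  assumes K: "\<And>n. finite (K n)"
    and prob: "\<forall>\<^sub>F n in sequentially. \<forall>k\<in>K n. prob_torus (\<nu> n k)"
    and range: "\<forall>\<^sub>F n in sequentially. \<forall>k\<in>K n. \<forall>i. \<bar>\<theta> n k $ i\<bar> \<le> pi"
    and small: "(\<lambda>n. \<Sum>k\<in>K n. versin_sum (\<theta> n k)) \<longlonglongrightarrow> 0"
    and iv: "cond_iv (\<lambda>n. sum_meas (K n) (\<nu> n)) Q"
  shows "cond_iv (\<lambda>n. sum_meas (K n) (\<lambda>k. rotate_meas (\<theta> n k) (\<nu> n k))) Q"
  unfolding cond_iv_def Let_def set_integral_eq_quad_U
proof
  fix p :: "int ^ 'd"
  define X where "X e n = integral\<^sup>L (sum_meas (K n) (\<nu> n)) (quad_U p e)" for e n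
  define Y where "Y e n = integral\<^sup>L (sum_meas (K n) (\<lambda>k. rotate_meas (\<theta> n k) (\<nu> n k))) (quad_U p e)"
    for e n
  define E where "E c n = c * ((norm1 p)\<^sup>2 * (2 * (\<Sum>k\<in>K n. versin_sum (\<theta> n k))))" for c n
  have E: "E c \<longlonglongrightarrow> 0" for c
    unfolding E_def by (intro tendsto_mult_right_zero small)
  have ev: "\<forall>\<^sub>F n in sequentially. (\<forall>k\<in>K n. prob_torus (\<nu> n k)) \<and> (\<forall>k\<in>K n. norm (\<theta> n k) < e / 2)"
    if "0 < e" for e
    using prob eventually_norm_lt [OF K range small, of "e / 2"] that by (simp add: eventually_conj)
  have upper: "limsup (\<lambda>n. ereal (Y e n)) \<le> ereal (1 + e) * limsup (\<lambda>n. ereal (X (3 / 2 * e) n))"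
    if e: "0 < e" "e < 1" for e
  proof (rule limsup_le_by_eventually_le)
    show "0 \<le> 1 + e" and "E (1 + 1 / e) \<longlonglongrightarrow> 0"
      using e E by simp_all
    show "\<forall>\<^sub>F n in sequentially. Y e n \<le> (1 + e) * X (3 / 2 * e) n + E (1 + 1 / e) n"
      using ev [OF e(1)]
    proof eventually_elim
      case (elim n)
      then show ?case
        using integral_sum_meas_rotate_quad_U_upper [OF K _ e, where \<mu> = "\<nu> n" and \<phi> = "\<theta> n" and p = p]
        by (simp add: X_def Y_def E_def)
    qed
  qed
  have lower: "ereal (1 - e) * liminf (\<lambda>n. ereal (X (1 / 2 * e) n)) \<le> liminf (\<lambda>n. ereal (Y e n))"
    if e: "0 < e" "e < 1" for e
  proof (rule liminf_ge_by_eventually_ge)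
    show "0 \<le> 1 - e" and "E (1 / e) \<longlonglongrightarrow> 0"
      using e E by simp_all
    show "\<forall>\<^sub>F n in sequentially. (1 - e) * X (1 / 2 * e) n - E (1 / e) n \<le> Y e n"
      using ev [OF e(1)]
    proof eventually_elim
      case (elim n)
      then show ?case
        using integral_sum_meas_rotate_quad_U_lower [OF K _ e, where \<mu> = "\<nu> n" and \<phi> = "\<theta> n" and p = p]
        by (simp add: X_def Y_def E_def)
    qed
  qed
  have X_lim: "((\<lambda>e. limsup (\<lambda>n. ereal (X e n))) \<longlongrightarrow> ereal (Q p)) (at_right 0)"
    "((\<lambda>e. liminf (\<lambda>n. ereal (X e n))) \<longlongrightarrow> ereal (Q p)) (at_right 0)"
    using iv unfolding cond_iv_def Let_def set_integral_eq_quad_U X_def by blast+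
  show "((\<lambda>\<epsilon>. limsup (\<lambda>n. ereal (integral\<^sup>L (sum_meas (K n) (\<lambda>k. rotate_meas (\<theta> n k) (\<nu> n k)))
        (quad_U p \<epsilon>)))) \<longlongrightarrow> ereal (Q p)) (at_right 0)
    \<and> ((\<lambda>\<epsilon>. liminf (\<lambda>n. ereal (integral\<^sup>L (sum_meas (K n) (\<lambda>k. rotate_meas (\<theta> n k) (\<nu> n k)))
        (quad_U p \<epsilon>)))) \<longlongrightarrow> ereal (Q p)) (at_right 0)"
    using tendsto_sandwich_scaled_at_right [where a = "3 / 2" and b = "1 / 2", OF _ _ X_lim _ upper lower]
    by (simp add: Y_def Liminf_le_Limsup)
qed

theorem proposition4p3:
  fixes \<nu> :: "nat \<Rightarrow> nat \<Rightarrow> (complex ^ 'd) measure"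
    and kn :: "nat \<Rightarrow> nat"
    and \<theta> :: "nat \<Rightarrow> nat \<Rightarrow> real ^ 'd"
    and Q :: "int ^ 'd \<Rightarrow> real"
  assumes prob: "\<And>n k. 1 \<le> n \<Longrightarrow> k \<in> {1..kn n} \<Longrightarrow> prob_torus (\<nu> n k)"
    and theta_range: "\<And>n k i. 1 \<le> n \<Longrightarrow> k \<in> {1..kn n} \<Longrightarrow> - pi < \<theta> n k $ i \<and> \<theta> n k $ i \<le> pi"
    and theta_lim: "(\<lambda>n. \<Sum>k\<in>{1..kn n}. (\<chi> i. 1 - cos (\<theta> n k $ i))) \<longlonglongrightarrow> (0 :: real ^ 'd)"
    and iii: "cond_iii (\<lambda>n. sum_meas {1..kn n} (\<nu> n))"
    and iv: "cond_iv (\<lambda>n. sum_meas {1..kn n} (\<nu> n)) Q"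
  shows "cond_iii (\<lambda>n. sum_meas {1..kn n} (\<lambda>k. rotate_meas (\<theta> n k) (\<nu> n k)))
       \<and> cond_iv (\<lambda>n. sum_meas {1..kn n} (\<lambda>k. rotate_meas (\<theta> n k) (\<nu> n k))) Q
       \<and> (\<forall>\<rho> \<in> M1. conv_one (\<lambda>n. sum_meas {1..kn n} (\<nu> n)) \<rho> \<longrightarrow>
              conv_one (\<lambda>n. sum_meas {1..kn n} (\<lambda>k. rotate_meas (\<theta> n k) (\<nu> n k))) \<rho>)"
proof -
  have prob_eventually: "\<forall>\<^sub>F n in sequentially. \<forall>k\<in>{1..kn n}. prob_torus (\<nu> n k)"
    using prob by (intro eventually_sequentiallyI [of 1]) blast
  have range: "\<forall>\<^sub>F n in sequentially. \<forall>k\<in>{1..kn n}. \<forall>i. \<bar>\<theta> n k $ i\<bar> \<le> pi"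
    using theta_range by (intro eventually_sequentiallyI [of 1]) (fastforce simp: abs_le_iff)
  have small: "(\<lambda>n. \<Sum>k\<in>{1..kn n}. versin_sum (\<theta> n k)) \<longlonglongrightarrow> 0"
    using theta_lim by (rule tendsto_sum_versin_sum)
  have conv: "conv_one (\<lambda>n. sum_meas {1..kn n} (\<lambda>k. rotate_meas (\<theta> n k) (\<nu> n k))) \<rho>"
    if "conv_one (\<lambda>n. sum_meas {1..kn n} (\<nu> n)) \<rho>" for \<rho>
    using prob_eventually small that by (intro conv_one_rotate) simp_all
  moreover have "cond_iv (\<lambda>n. sum_meas {1..kn n} (\<lambda>k. rotate_meas (\<theta> n k) (\<nu> n k))) Q"
    using prob_eventually range small iv by (intro cond_iv_rotate) simp_all
  moreover have "cond_iii (\<lambda>n. sum_meas {1..kn n} (\<lambda>k. rotate_meas (\<theta> n k) (\<nu> n k)))"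
    using iii conv unfolding cond_iii_def by blast
  ultimately show ?thesis
    by blast
qed

end
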